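(* Let $p\ge5$, write $x=p-2$, and consider the black metallic tree $\mathcal B_\rho$ under the rightmost assignment (the last son of each node is black). For a node $\nu$ let $u$ be the nzm-code of $\nu-1$ and $v$ the nzm-code of $\nu-2$. Then the sons of the nodes, in increasing order, have the following nzm-codes: (1) root $\nu=1$: the sons are $h+1$ (one digit) for $h=1,\dots,p-4$, then $x$; (2) black $\nu\neq1$: the sons are $u\,h$ for $h=1,\dots,p-3$; (3) white $\nu$ with nzm-signature $1$ or $x$: first son $v\,x$, then $u\,(h-1)$ for $h=2,\dots,p-2$; (4) white $\nu$ with nzm-signature $a$, $1<a<x$: the sons $u\,h$ for $h=1,\dots,p-3$, then $u\,x$. Moreover: $\mathcal B_\rho$ does not have a preferred son property for the nzm-codes, whatever the digit chosen; for every node $\nu$, the integer whose nzm-code is the nzm-code of $\nu$ followed by $1$ (the successor of $\nu$) is a son of $\nu+1$ in $\mathcal B_\rho$, namely its leftmost son or its second son; and for no assignment $\alpha$ on the black metallic tree and no digit $a\in\{1,\dots,p-2\}$ does every node $\nu$ of $\mathcal B_\alpha$ have exactly one son whose nzm-code is the nzm-code of $\nu$ followed by $a$.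
   Context: Fix $p\ge5$. Metallic numbers: $m_{-1}=0$, $m_0=1$, $m_{n+2}=(p-2)m_{n+1}-m_n$. With $x=p-2$, $d=p-3$, the nzm-code of a positive integer $n$ is the unique word $a_k\cdots a_0$ over $\{1,\dots,p-2\}$ with $n=\sum a_im_i$ containing no factor $x\,d^j\,x$ ($j\ge0$); its nzm-signature is the last digit $a_0$; $w\,e$ denotes the word $w$ followed by the digit $e$. Black metallic tree under an assignment $\alpha$, $\mathcal B_\alpha$: nodes are the positive integers, each black or white; the root $1$ is black; nodes are processed in increasing order and node $\nu$ receives $p-2$ sons if white and $p-3$ sons if black, namely the smallest integers not yet used, in increasing order; an assignment specifies for each node the position (leftmost $=1$) of its unique black son among its sons, other sons being white. The rightmost assignment $\rho$ puts the black son at the last position. *)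

theory Defs
  imports Main
begin

text \<open>Metallic numbers: metal p i = m_i for i \<ge> 0 (m_0 = 1, m_1 = p - 2, recurrence
  m_(n+2) = (p-2) m_(n+1) - m_n; with m_(-1) = 0 this gives m_1 = p - 2).\<close>
fun metal :: "nat \<Rightarrow> nat \<Rightarrow> nat" where
  "metal p 0 = 1"
| "metal p (Suc 0) = p - 2"
| "metal p (Suc (Suc n)) = (p - 2) * metal p (Suc n) - metal p n"

text \<open>Words are lists written most significant digit first: [a_k, ..., a_0].\<close>
definition nzm_val :: "nat \<Rightarrow> nat list \<Rightarrow> nat" where
  "nzm_val p w = (\<Sum>i<length w. rev w ! i * metal p i)"

definition nzm_admissible :: "nat \<Rightarrow> nat list \<Rightarrow> bool" where
  "nzm_admissible p w \<longleftrightarrow> set w \<subseteq> {1..p - 2} \<and>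
     \<not> (\<exists>u j v. w = u @ [p - 2] @ replicate j (p - 3) @ [p - 2] @ v)"

definition nzm_code :: "nat \<Rightarrow> nat \<Rightarrow> nat list" where
  "nzm_code p n = (THE w. nzm_admissible p w \<and> nzm_val p w = n)"

definition nzm_signature :: "nat \<Rightarrow> nat \<Rightarrow> nat" where
  "nzm_signature p n = last (nzm_code p n)"

text \<open>The choice function c receives the node
  and its number of sons and returns the position (leftmost = 1) of the black son.
  mt_build p c n = (colouring of the nodes assigned so far, smallest unused integer)
  after processing nodes 1..n.\<close>
primrec mt_build :: "nat \<Rightarrow> (nat \<Rightarrow> nat \<Rightarrow> nat) \<Rightarrow> nat \<Rightarrow> (nat \<Rightarrow> bool) \<times> nat" where
  "mt_build p c 0 = ((\<lambda>i. i = 1), 2)"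
| "mt_build p c (Suc n) =
     (let b = fst (mt_build p c n); nx = snd (mt_build p c n);
          dg = (if b (Suc n) then p - 3 else p - 2)
      in ((\<lambda>i. if nx \<le> i \<and> i < nx + dg then i - nx + 1 = c (Suc n) dg else b i), nx + dg))"

definition mt_black :: "nat \<Rightarrow> (nat \<Rightarrow> nat \<Rightarrow> nat) \<Rightarrow> nat \<Rightarrow> bool" where
  "mt_black p c \<nu> = fst (mt_build p c \<nu>) \<nu>"

definition mt_deg :: "nat \<Rightarrow> (nat \<Rightarrow> nat \<Rightarrow> nat) \<Rightarrow> nat \<Rightarrow> nat" where
  "mt_deg p c \<nu> = (if mt_black p c \<nu> then p - 3 else p - 2)"

definition mt_first :: "nat \<Rightarrow> (nat \<Rightarrow> nat \<Rightarrow> nat) \<Rightarrow> nat \<Rightarrow> nat" where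
  "mt_first p c \<nu> = snd (mt_build p c (\<nu> - 1))"

definition mt_sons :: "nat \<Rightarrow> (nat \<Rightarrow> nat \<Rightarrow> nat) \<Rightarrow> nat \<Rightarrow> nat list" where
  "mt_sons p c \<nu> = [mt_first p c \<nu> ..< mt_first p c \<nu> + mt_deg p c \<nu>]"

definition assign :: "(nat \<Rightarrow> nat) \<Rightarrow> nat \<Rightarrow> nat \<Rightarrow> nat" where
  "assign \<alpha> = (\<lambda>\<nu> dg. \<alpha> \<nu>)"

definition valid_assignment :: "nat \<Rightarrow> (nat \<Rightarrow> nat) \<Rightarrow> bool" where
  "valid_assignment p \<alpha> \<longleftrightarrow> (\<forall>\<nu>\<ge>1. 1 \<le> \<alpha> \<nu> \<and> \<alpha> \<nu> \<le> mt_deg p (assign \<alpha>) \<nu>)"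

definition rightmost :: "nat \<Rightarrow> nat \<Rightarrow> nat" where
  "rightmost = (\<lambda>\<nu> dg. dg)"

end

theory Submission
  imports Defs
begin

(* The successor of an admissible word raises its last digit when the result is still
   admissible, and otherwise takes the successor of the prefix and appends 1. Hence the
   integers whose code extends the code of q by one digit form a block of consecutive
   integers, of length p - 3 if the code of q ends in x d^j and p - 2 otherwise, and these
   blocks, for q = 0, 1, 2, ..., tile the positive integers. In the rightmost tree a node has
   p - 3 or p - 2 sons according as it is black or white, and its last son is black.
   Comparing the two tilings shows that the sons of a node n >= 2 occupy the block of n - 1,
   shifted one place to the left exactly when n is white with signature 1 or x; the shapes of
   the son lists and the position of the successor code are read off from this. The sons of
   the root have one-digit codes, which rules out every preferred son property. *)

definition has_xd_suffix :: "nat \<Rightarrow> nat list \<Rightarrow> bool" where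
  "has_xd_suffix p w \<longleftrightarrow> (\<exists>u j. w = u @ [p - 2] @ replicate j (p - 3))"

definition digit_bound :: "nat \<Rightarrow> nat list \<Rightarrow> nat" where
  "digit_bound p w = (if has_xd_suffix p w then p - 3 else p - 2)"

lemma has_xd_suffix_Nil [simp]: "\<not> has_xd_suffix p []"
  by (simp add: has_xd_suffix_def)

lemma has_xd_suffix_snoc:
  "has_xd_suffix p (w @ [a]) \<longleftrightarrow> a = p - 2 \<or> (a = p - 3 \<and> has_xd_suffix p w)"
proof
  assume "has_xd_suffix p (w @ [a])"
  then obtain u j where e: "w @ [a] = u @ [p - 2] @ replicate j (p - 3)"
    unfolding has_xd_suffix_def by blast
  show "a = p - 2 \<or> (a = p - 3 \<and> has_xd_suffix p w)"
  proof (cases j)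
    case 0
    then show ?thesis using e by simp
  next
    case (Suc j')
    then have "w @ [a] = (u @ [p - 2] @ replicate j' (p - 3)) @ [p - 3]"
      using e by (simp add: replicate_append_same[symmetric])
    then show ?thesis unfolding has_xd_suffix_def by blast
  qed
next
  assume "a = p - 2 \<or> (a = p - 3 \<and> has_xd_suffix p w)"
  then show "has_xd_suffix p (w @ [a])"
  proof
    assume "a = p - 2"
    then have "w @ [a] = w @ [p - 2] @ replicate 0 (p - 3)" by simp
    then show ?thesis unfolding has_xd_suffix_def by blast
  next
    assume "a = p - 3 \<and> has_xd_suffix p w"
    then obtain u j where "a = p - 3" "w = u @ [p - 2] @ replicate j (p - 3)"
      unfolding has_xd_suffix_def by blast
    then have "w @ [a] = u @ [p - 2] @ replicate (Suc j) (p - 3)"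
      by (simp add: replicate_append_same[symmetric])
    then show ?thesis unfolding has_xd_suffix_def by blast
  qed
qed

lemma forbidden_factor_snoc:
  "(\<exists>u j v. w @ [a] = u @ [p - 2] @ replicate j (p - 3) @ [p - 2] @ v) \<longleftrightarrow>
   (\<exists>u j v. w = u @ [p - 2] @ replicate j (p - 3) @ [p - 2] @ v) \<or>
   (a = p - 2 \<and> has_xd_suffix p w)"
  (is "?lhs \<longleftrightarrow> ?rhs")
proof
  assume ?lhs
  then obtain u j v where e: "w @ [a] = u @ [p - 2] @ replicate j (p - 3) @ [p - 2] @ v"
    by blast
  show ?rhs
  proof (cases v rule: rev_exhaust)
    case Nil
    then have "w @ [a] = (u @ [p - 2] @ replicate j (p - 3)) @ [p - 2]" using e by simp
    then show ?thesis unfolding has_xd_suffix_def by blast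
  next
    case (snoc v' b)
    then have "w @ [a] = (u @ [p - 2] @ replicate j (p - 3) @ [p - 2] @ v') @ [b]"
      using e by simp
    then show ?thesis by blast
  qed
next
  assume ?rhs
  then show ?lhs
  proof
    assume "\<exists>u j v. w = u @ [p - 2] @ replicate j (p - 3) @ [p - 2] @ v"
    then obtain u j v where "w @ [a] = u @ [p - 2] @ replicate j (p - 3) @ [p - 2] @ (v @ [a])"
      by auto
    then show ?lhs by blast
  next
    assume "a = p - 2 \<and> has_xd_suffix p w"
    then obtain u j where "w @ [a] = u @ [p - 2] @ replicate j (p - 3) @ [p - 2] @ []"
      unfolding has_xd_suffix_def by auto
    then show ?lhs by blast
  qed
qed

lemma nzm_admissible_Nil [simp]: "nzm_admissible p []"
  by (simp add: nzm_admissible_def)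

lemma nzm_admissible_snoc:
  "nzm_admissible p (w @ [a]) \<longleftrightarrow> nzm_admissible p w \<and> 1 \<le> a \<and> a \<le> digit_bound p w"
  unfolding nzm_admissible_def digit_bound_def forbidden_factor_snoc by auto

definition nzm_val_from :: "nat \<Rightarrow> nat \<Rightarrow> nat list \<Rightarrow> nat" where
  "nzm_val_from p k w = (\<Sum>i<length w. rev w ! i * metal p (i + k))"

lemma nzm_val_from_0: "nzm_val_from p 0 w = nzm_val p w"
  by (simp add: nzm_val_from_def nzm_val_def)

lemma nzm_val_from_Nil [simp]: "nzm_val_from p k [] = 0"
  by (simp add: nzm_val_from_def)

lemma nzm_val_from_snoc:
  "nzm_val_from p k (w @ [a]) = a * metal p k + nzm_val_from p (Suc k) w"
  by (simp add: nzm_val_from_def sum.lessThan_Suc_shift del: sum.lessThan_Suc)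

lemma metal_pos_mono:
  assumes "4 \<le> p"
  shows "1 \<le> metal p n \<and> metal p n \<le> metal p (Suc n)"
proof (induction n)
  case 0
  then show ?case using assms by simp
next
  case (Suc n)
  have "2 * metal p (Suc n) \<le> (p - 2) * metal p (Suc n)"
    using assms by (intro mult_le_mono1) simp
  then have "metal p (Suc n) \<le> metal p (Suc (Suc n))"
    using Suc.IH by (simp only: metal.simps) linarith
  then show ?case using Suc.IH by linarith
qed

lemma metal_rec_add:
  assumes "4 \<le> p"
  shows "metal p (Suc (Suc n)) + metal p n = (p - 2) * metal p (Suc n)"
proof -
  have "metal p n \<le> 1 * metal p (Suc n)" using metal_pos_mono[OF assms] by simp
  also have "\<dots> \<le> (p - 2) * metal p (Suc n)" using assms by (intro mult_le_mono1) simp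
  finally show ?thesis by simp
qed

lemma nzm_val_from_rec_add:
  assumes "4 \<le> p"
  shows "nzm_val_from p (Suc (Suc k)) w + nzm_val_from p k w = (p - 2) * nzm_val_from p (Suc k) w"
  unfolding nzm_val_from_def sum.distrib[symmetric] sum_distrib_left
proof (rule sum.cong)
  fix i
  have "metal p (i + Suc (Suc k)) + metal p (i + k) = (p - 2) * metal p (i + Suc k)"
    using metal_rec_add[OF assms, of "i + k"] by simp
  then show "rev w ! i * metal p (i + Suc (Suc k)) + rev w ! i * metal p (i + k) =
      (p - 2) * (rev w ! i * metal p (i + Suc k))"
    by (metis add_mult_distrib2 mult.left_commute)
qed simp

fun succ_rev :: "nat \<Rightarrow> nat list \<Rightarrow> nat list" where
  "succ_rev p [] = [1]"
| "succ_rev p (a # r) = (if a < digit_bound p (rev r) then Suc a # r else 1 # succ_rev p r)"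

definition nzm_succ :: "nat \<Rightarrow> nat list \<Rightarrow> nat list" where
  "nzm_succ p w = rev (succ_rev p (rev w))"

lemma nzm_succ_Nil [simp]: "nzm_succ p [] = [1]"
  by (simp add: nzm_succ_def)

lemma nzm_succ_snoc:
  "nzm_succ p (w @ [a]) = (if a < digit_bound p w then w @ [Suc a] else nzm_succ p w @ [1])"
  by (simp add: nzm_succ_def)

definition nzm_word :: "nat \<Rightarrow> nat \<Rightarrow> nat list" where
  "nzm_word p n = (nzm_succ p ^^ n) []"

lemma nzm_word_0 [simp]: "nzm_word p 0 = []"
  by (simp add: nzm_word_def)

lemma nzm_word_Suc: "nzm_word p (Suc n) = nzm_succ p (nzm_word p n)"
  by (simp add: nzm_word_def)

lemma nzm_word_block_from_first:
  assumes "nzm_word p (s + 1) = w @ [1]" "1 \<le> a" "a \<le> digit_bound p w"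
  shows "nzm_word p (s + a) = w @ [a]"
  using assms(2,3)
proof (induction a)
  case 0
  then show ?case by simp
next
  case (Suc a)
  show ?case
  proof (cases "a = 0")
    case True
    then show ?thesis using assms(1) by simp
  next
    case False
    then have "nzm_word p (s + a) = w @ [a]" using Suc by simp
    then show ?thesis using Suc.prems by (simp add: nzm_word_Suc nzm_succ_snoc)
  qed
qed

context
  fixes p :: nat
  assumes p_ge_5: "5 \<le> p"
begin

lemma p_minus_1: "p - 1 = Suc (p - 2)"
  using p_ge_5 by simp

lemma p_minus_2: "p - 2 = Suc (p - 3)"
  and p_minus_3_ge: "2 \<le> p - 3"
  using p_ge_5 by simp_all

lemma digit_bound_ge: "2 \<le> digit_bound p w" "digit_bound p w \<le> p - 2"
  using p_ge_5 by (auto simp: digit_bound_def)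

lemma digit_bound_snoc:
  assumes "a \<le> digit_bound p w"
  shows "digit_bound p (w @ [a]) = (if a = digit_bound p w then p - 3 else p - 2)"
  using assms p_ge_5
  by (cases "has_xd_suffix p w") (simp_all add: digit_bound_def has_xd_suffix_snoc)

lemma nzm_succ_spec:
  assumes "nzm_admissible p w"
  shows "nzm_admissible p (nzm_succ p w)
    \<and> nzm_val_from p 0 (nzm_succ p w) = nzm_val_from p 0 w + 1
    \<and> nzm_val_from p 1 (nzm_succ p w) = nzm_val_from p 1 w + digit_bound p w"
  using assms
proof (induction w rule: rev_induct)
  case Nil
  then show ?case
    using nzm_admissible_snoc[of p "[]" 1] nzm_val_from_snoc[of p _ "[]" 1] p_ge_5
    by (simp add: digit_bound_def)
next
  case (snoc a w)
  have w: "nzm_admissible p w" "1 \<le> a" "a \<le> digit_bound p w"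
    using snoc.prems by (simp_all add: nzm_admissible_snoc)
  show ?case
  proof (cases "a < digit_bound p w")
    case True
    then have "digit_bound p (w @ [a]) = p - 2" using digit_bound_snoc[OF w(3)] by simp
    then show ?thesis
      using True w by (simp add: nzm_succ_snoc nzm_admissible_snoc nzm_val_from_snoc)
  next
    case False
    then have a: "a = digit_bound p w" using w by simp
    then have bound: "digit_bound p (w @ [a]) = p - 3" using digit_bound_snoc[OF w(3)] by simp
    define v where "v = nzm_succ p w"
    have IH: "nzm_admissible p v" "nzm_val_from p 0 v = nzm_val_from p 0 w + 1"
        "nzm_val_from p 1 v = nzm_val_from p 1 w + a"
      using snoc.IH w a by (simp_all add: v_def)
    have rec_v: "nzm_val_from p 2 v + nzm_val_from p 0 v = (p - 2) * nzm_val_from p 1 v"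
      and rec_w: "nzm_val_from p 2 w + nzm_val_from p 0 w = (p - 2) * nzm_val_from p 1 w"
      using nzm_val_from_rec_add[of p 0] p_ge_5 by (simp_all add: numeral_2_eq_2)
    have "nzm_val_from p 1 (v @ [1]) = nzm_val_from p 1 (w @ [a]) + digit_bound p (w @ [a])"
      using IH(2,3) rec_v rec_w p_ge_5
      by (simp add: nzm_val_from_snoc bound numeral_2_eq_2 algebra_simps)
    moreover have "nzm_admissible p (v @ [1])"
      using IH(1) digit_bound_ge(1)[of v] by (simp add: nzm_admissible_snoc)
    ultimately show ?thesis
      using False IH(2,3) by (simp add: nzm_succ_snoc v_def[symmetric] nzm_val_from_snoc)
  qed
qed

lemma nzm_word_admissible_val:
  "nzm_admissible p (nzm_word p n) \<and> nzm_val_from p 0 (nzm_word p n) = n"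
  by (induction n) (simp_all add: nzm_word_Suc nzm_succ_spec)

lemma nzm_word_block:
  assumes "1 \<le> a" "a \<le> digit_bound p (nzm_word p q)"
  shows "nzm_word p (nzm_val_from p 1 (nzm_word p q) + a) = nzm_word p q @ [a]"
proof -
  have "nzm_word p (nzm_val_from p 1 (nzm_word p q) + 1) = nzm_word p q @ [1]"
  proof (induction q)
    case 0
    then show ?case by (simp add: nzm_word_Suc)
  next
    case (Suc q)
    let ?w = "nzm_word p q" and ?b = "digit_bound p (nzm_word p q)"
    have "nzm_word p (nzm_val_from p 1 ?w + ?b) = ?w @ [?b]"
      using nzm_word_block_from_first[OF Suc.IH] digit_bound_ge(1)[of ?w] by simp
    then show ?case
      using nzm_succ_spec[of ?w] nzm_word_admissible_val[of q]
      by (simp add: nzm_word_Suc nzm_succ_snoc)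
  qed
  then show ?thesis using nzm_word_block_from_first assms by blast
qed

lemma nzm_word_of_admissible:
  "nzm_admissible p w \<Longrightarrow> nzm_word p (nzm_val_from p 0 w) = w"
proof (induction w rule: rev_induct)
  case (snoc a w)
  then have "nzm_admissible p w" "1 \<le> a" "a \<le> digit_bound p w"
    by (simp_all add: nzm_admissible_snoc)
  then show ?case
    using snoc.IH nzm_word_block[of a "nzm_val_from p 0 w"]
    by (simp add: nzm_val_from_snoc add.commute)
qed simp

lemma nzm_code_eq_word: "nzm_code p n = nzm_word p n"
  unfolding nzm_code_def
proof (rule the_equality)
  show "nzm_admissible p (nzm_word p n) \<and> nzm_val p (nzm_word p n) = n"
    using nzm_word_admissible_val by (simp add: nzm_val_from_0)
next
  fix w
  assume "nzm_admissible p w \<and> nzm_val p w = n"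
  then show "w = nzm_word p n"
    using nzm_word_of_admissible by (auto simp: nzm_val_from_0)
qed

lemma nzm_code_admissible: "nzm_admissible p (nzm_code p n)"
  and nzm_val_from_code: "nzm_val_from p 0 (nzm_code p n) = n"
  using nzm_word_admissible_val by (simp_all add: nzm_code_eq_word)

lemma nzm_code_0 [simp]: "nzm_code p 0 = []"
  by (simp add: nzm_code_eq_word)

lemma nzm_code_inj: "nzm_code p m = nzm_code p n \<Longrightarrow> m = n"
  by (metis nzm_val_from_code)

(* the value of the code of q followed by a digit 0 *)
definition block_start :: "nat \<Rightarrow> nat" where
  "block_start q = nzm_val_from p 1 (nzm_code p q)"

definition block_len :: "nat \<Rightarrow> nat" where
  "block_len q = digit_bound p (nzm_code p q)"

lemma nzm_code_block:
  "1 \<le> a \<Longrightarrow> a \<le> block_len q \<Longrightarrow> nzm_code p (block_start q + a) = nzm_code p q @ [a]"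
  unfolding block_start_def block_len_def nzm_code_eq_word by (rule nzm_word_block)

lemma block_start_0 [simp]: "block_start 0 = 0"
  and block_len_0 [simp]: "block_len 0 = p - 2"
  by (simp_all add: block_start_def block_len_def nzm_code_eq_word digit_bound_def)

lemma block_start_Suc: "block_start (Suc q) = block_start q + block_len q"
  using nzm_succ_spec[OF nzm_code_admissible]
  by (simp add: block_start_def block_len_def nzm_code_eq_word nzm_word_Suc)

lemma block_len_ge: "2 \<le> block_len q" and block_len_le: "block_len q \<le> p - 2"
  using digit_bound_ge by (simp_all add: block_len_def)

lemma block_len_cases: "block_len q = p - 3 \<or> block_len q = p - 2"
  by (simp add: block_len_def digit_bound_def)

lemma block_decomp:
  assumes "1 \<le> n"
  obtains q a where "1 \<le> a" "a \<le> block_len q" "n = block_start q + a"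
proof -
  have "nzm_code p n \<noteq> []" using nzm_val_from_code[of n] assms by auto
  then obtain w a where w: "nzm_code p n = w @ [a]" by (metis rev_exhaust)
  then have adm: "nzm_admissible p w" "1 \<le> a" "a \<le> digit_bound p w"
    using nzm_code_admissible[of n] by (simp_all add: nzm_admissible_snoc)
  define q where "q = nzm_val_from p 0 w"
  have wq: "w = nzm_code p q"
    using adm(1) nzm_word_of_admissible by (simp add: nzm_code_eq_word q_def)
  have "n = nzm_val_from p 0 (w @ [a])" using nzm_val_from_code[of n] by (simp add: w)
  also have "\<dots> = block_start q + a"
    by (simp add: nzm_val_from_snoc block_start_def wq[symmetric])
  finally have n: "n = block_start q + a" .
  have "a \<le> block_len q" using adm(3) by (simp add: block_len_def wq[symmetric])
  then show ?thesis using that adm(2) n by simp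
qed

lemma block_unique:
  assumes "1 \<le> a" "a \<le> block_len q" "1 \<le> a'" "a' \<le> block_len q'"
    and "block_start q + a = block_start q' + a'"
  shows "q = q' \<and> a = a'"
proof -
  have "nzm_code p q @ [a] = nzm_code p q' @ [a']"
    using nzm_code_block[of a q] nzm_code_block[of a' q'] assms by simp
  then show ?thesis using nzm_code_inj by simp
qed

lemma nzm_signature_block:
  "1 \<le> a \<Longrightarrow> a \<le> block_len q \<Longrightarrow> nzm_signature p (block_start q + a) = a"
  by (simp add: nzm_signature_def nzm_code_block)

lemma block_len_block:
  assumes "1 \<le> a" "a \<le> block_len q"
  shows "block_len (block_start q + a) = (if a = block_len q then p - 3 else p - 2)"
  using assms digit_bound_snoc[of a "nzm_code p q"]
  by (simp add: nzm_code_block block_len_def)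

lemma block_len_pred:
  assumes "1 \<le> n" "1 \<le> a" "a \<le> block_len q" "Suc n = block_start q + a"
  shows "block_len n = (if a = 1 then p - 3 else p - 2)"
proof (cases "a = 1")
  case True
  then obtain q' where q': "q = Suc q'"
    using assms by (cases q) auto
  then have n: "n = block_start q' + block_len q'"
    using True assms(4) by (simp add: block_start_Suc)
  have "block_len (block_start q' + block_len q') = p - 3"
    using block_len_block[of "block_len q'" q'] block_len_ge[of q'] by simp
  then show ?thesis using True n by simp
next
  case False
  then have n: "n = block_start q + (a - 1)" using assms(2,4) by simp
  have "block_len (block_start q + (a - 1)) = p - 2"
    using block_len_block[of "a - 1" q] False assms(2,3) by simp
  then show ?thesis using False n by simp
qed

lemma block_start_gt: "1 \<le> q \<Longrightarrow> 2 * q < block_start q"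
proof (induction q)
  case (Suc q)
  then show ?case
    using block_len_ge[of q] p_ge_5 by (cases "q = 0") (simp_all add: block_start_Suc)
qed simp

lemma nzm_code_digit: "1 \<le> a \<Longrightarrow> a \<le> p - 2 \<Longrightarrow> nzm_code p a = [a]"
  using nzm_code_block[of a 0] by simp

lemma map_nzm_code_block:
  assumes "1 \<le> i" "j \<le> Suc (block_len q)"
  shows "map (nzm_code p) [block_start q + i..<block_start q + j]
    = map (\<lambda>h. nzm_code p q @ [h]) [i..<j]"
proof -
  have "[block_start q + i..<block_start q + j] = map ((+) (block_start q)) [i..<j]"
    by (induction j) auto
  then show ?thesis using assms by (simp add: nzm_code_block)
qed

definition rm_free :: "nat \<Rightarrow> nat" where
  "rm_free n = snd (mt_build p rightmost n)"

definition rm_colour :: "nat \<Rightarrow> nat \<Rightarrow> bool" where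
  "rm_colour n = fst (mt_build p rightmost n)"

lemma rm_free_0 [simp]: "rm_free 0 = 2"
  and rm_colour_0: "rm_colour 0 i \<longleftrightarrow> i = 1"
  by (simp_all add: rm_free_def rm_colour_def)

lemma rm_free_Suc: "rm_free (Suc n) = rm_free n + (if rm_colour n (Suc n) then p - 3 else p - 2)"
  by (simp add: rm_free_def rm_colour_def Let_def)

lemma rm_colour_Suc:
  "rm_colour (Suc n) i =
    (if rm_free n \<le> i \<and> i < rm_free (Suc n) then Suc i = rm_free (Suc n) else rm_colour n i)"
  unfolding rm_free_Suc by (auto simp: rm_free_def rm_colour_def Let_def rightmost_def)

lemma rm_free_ge: "2 + 2 * n \<le> rm_free n"
  using p_ge_5 by (induction n) (auto simp: rm_free_Suc)

lemma rm_free_strict_mono: "strict_mono rm_free"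
  using p_ge_5 by (simp add: strict_mono_Suc_iff rm_free_Suc)

lemma rm_colour_iff:
  "rm_colour n i \<longleftrightarrow> i = 1 \<or> (\<exists>m. 1 \<le> m \<and> m \<le> n \<and> Suc i = rm_free m)"
proof (induction n)
  case 0
  then show ?case by (simp add: rm_colour_0)
next
  case (Suc n)
  show ?case
  proof (cases "rm_free n \<le> i \<and> i < rm_free (Suc n)")
    case True
    have "Suc i \<noteq> rm_free m" if "m \<le> n" for m
    proof -
      have "rm_free m \<le> rm_free n"
        using rm_free_strict_mono that by (simp add: strict_mono_less_eq)
      then show ?thesis using True by linarith
    qed
    then show ?thesis
      using True rm_free_ge[of n] by (auto simp: rm_colour_Suc le_Suc_eq)
  next
    case False
    have "rm_free n < rm_free (Suc n)"
      using rm_free_strict_mono by (simp add: strict_mono_def)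
    then have "Suc i \<noteq> rm_free (Suc n)" using False by linarith
    then show ?thesis
      using False Suc.IH by (auto simp: rm_colour_Suc le_Suc_eq)
  qed
qed

lemma rm_colour_stable:
  assumes "\<nu> \<le> Suc n"
  shows "rm_colour n \<nu> \<longleftrightarrow> \<nu> = 1 \<or> (\<exists>m\<ge>1. Suc \<nu> = rm_free m)"
proof -
  have "m \<le> n" if "Suc \<nu> = rm_free m" for m
    using rm_free_ge[of m] that assms by linarith
  then show ?thesis unfolding rm_colour_iff by blast
qed

lemma mt_black_rightmost_iff:
  "mt_black p rightmost \<nu> \<longleftrightarrow> \<nu> = 1 \<or> (\<exists>m\<ge>1. Suc \<nu> = rm_free m)"
  using rm_colour_stable[of \<nu> \<nu>] by (simp add: mt_black_def rm_colour_def)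

lemma rm_free_Suc_deg: "rm_free (Suc n) = rm_free n + mt_deg p rightmost (Suc n)"
  using rm_colour_stable[of "Suc n" n]
  by (simp add: rm_free_Suc mt_deg_def mt_black_rightmost_iff)

lemma mt_first_rightmost: "mt_first p rightmost \<nu> = rm_free (\<nu> - 1)"
  by (simp add: mt_first_def rm_free_def)

definition white_extreme :: "nat \<Rightarrow> bool" where
  "white_extreme \<nu> \<longleftrightarrow> \<not> mt_black p rightmost \<nu> \<and> nzm_signature p \<nu> \<in> {1, p - 2}"

lemma not_white_extreme_2: "\<not> white_extreme 2"
proof -
  have "nzm_signature p 2 = 2" "p - 2 \<noteq> 2"
    using p_ge_5 nzm_code_digit[of 2] by (simp_all add: nzm_signature_def)
  then show ?thesis by (simp add: white_extreme_def)
qed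

lemma not_white_extreme_after_short_block:
  assumes "block_len q = p - 3"
  shows "\<not> white_extreme (Suc (Suc q))"
proof -
  have "q \<noteq> 0"
  proof
    assume "q = 0"
    then show False using assms p_ge_5 by simp
  qed
  obtain q' a where a: "1 \<le> a" "a \<le> block_len q'" "Suc q = block_start q' + a"
    by (rule block_decomp[of "Suc q"]) auto
  then have "a = 1"
    using block_len_pred[of q a q'] assms \<open>q \<noteq> 0\<close> p_ge_5 by (simp split: if_splits)
  then have "Suc (Suc q) = block_start q' + 2" using a by simp
  then have "nzm_signature p (Suc (Suc q)) = 2"
    using nzm_signature_block[of 2 q'] block_len_ge[of q'] by simp
  moreover have "p - 2 \<noteq> 2" using p_ge_5 by simp
  ultimately show ?thesis by (simp add: white_extreme_def)
qed

definition aligned_upto :: "nat \<Rightarrow> bool" where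
  "aligned_upto M \<longleftrightarrow> (\<forall>m. 1 \<le> m \<longrightarrow> m \<le> M \<longrightarrow>
     rm_free m + of_bool (white_extreme (Suc m)) = block_start m + 1)"

(* the position in block q of the last son of node q + 1 *)
definition black_pos :: "nat \<Rightarrow> nat" where
  "black_pos q = block_len q - of_bool (white_extreme (Suc (Suc q)))"

lemma black_pos_bounds:
  "p - 3 \<le> black_pos q" "black_pos q \<le> block_len q"
  "black_pos q < block_len q \<Longrightarrow> block_len q = p - 2"
  using block_len_cases[of q] not_white_extreme_after_short_block[of q]
  by (auto simp: black_pos_def)

lemma rm_free_aligned:
  assumes "aligned_upto M" "q < M"
  shows "rm_free (Suc q) = block_start q + black_pos q + 1"
proof -
  have "rm_free (Suc q) + of_bool (white_extreme (Suc (Suc q))) = block_start q + block_len q + 1"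
    using assms by (simp add: aligned_upto_def block_start_Suc)
  moreover have "2 \<le> block_len q" "of_bool (white_extreme (Suc (Suc q))) \<le> (1::nat)"
    by (simp_all add: block_len_ge)
  ultimately show ?thesis unfolding black_pos_def by linarith
qed

lemma black_iff_block_pos:
  assumes "aligned_upto M" "1 \<le> M" and a: "1 \<le> a" "a \<le> block_len q"
    and "2 \<le> block_start q + a" "block_start q + a \<le> M + 2"
  shows "mt_black p rightmost (block_start q + a) \<longleftrightarrow> a = black_pos q"
proof
  have "Suc q \<le> M"
    using block_start_gt[of q] assms by (cases "q = 0") auto
  then have "Suc (block_start q + black_pos q) = rm_free (Suc q)"
    using rm_free_aligned[OF assms(1)] by simp
  then show "mt_black p rightmost (block_start q + a)" if "a = black_pos q"
    using that by (auto simp: mt_black_rightmost_iff)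
next
  assume "mt_black p rightmost (block_start q + a)"
  then obtain m where m: "1 \<le> m" "Suc (block_start q + a) = rm_free m"
    using assms(5) by (auto simp: mt_black_rightmost_iff)
  then have "m \<le> M" using rm_free_ge[of m] assms(6) by linarith
  then obtain m' where m': "m = Suc m'" "m' < M" using m(1) by (cases m) auto
  then have "block_start q + a = block_start m' + black_pos m'"
    using m(2) rm_free_aligned[OF assms(1)] by simp
  moreover have "1 \<le> black_pos m'" "black_pos m' \<le> block_len m'"
    using black_pos_bounds[of m'] p_minus_3_ge by simp_all
  ultimately show "a = black_pos q" using block_unique a by blast
qed

lemma white_extreme_balance:
  assumes "aligned_upto k" "1 \<le> k"
  shows "of_bool (white_extreme (Suc (Suc k))) + of_bool (block_len k = p - 3)
    = of_bool (mt_black p rightmost (Suc k)) + (of_bool (white_extreme (Suc k)) :: nat)"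
proof -
  obtain q a where a: "1 \<le> a" "a \<le> block_len q" "Suc k = block_start q + a"
    by (rule block_decomp[of "Suc k"]) auto
  have black: "mt_black p rightmost (Suc k) \<longleftrightarrow> a = black_pos q"
    using black_iff_block_pos[OF assms a(1,2)] a(3) assms(2) by simp
  have white: "white_extreme (Suc k) \<longleftrightarrow> a \<noteq> black_pos q \<and> (a = 1 \<or> a = p - 2)"
    using black nzm_signature_block[OF a(1,2)] a(3) by (auto simp: white_extreme_def)
  have short: "block_len k = p - 3 \<longleftrightarrow> a = 1"
    using block_len_pred[OF \<open>1 \<le> k\<close> a] p_minus_2 by simp
  note L = black_pos_bounds[of q]
  show ?thesis
  proof (cases "a < block_len q")
    case True
    then have a': "1 \<le> a + 1" "a + 1 \<le> block_len q" "Suc (Suc k) = block_start q + (a + 1)"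
      using a by auto
    have "mt_black p rightmost (Suc (Suc k)) \<longleftrightarrow> a + 1 = black_pos q"
      using black_iff_block_pos[OF assms a'(1,2)] a'(3) by simp
    then have "white_extreme (Suc (Suc k)) \<longleftrightarrow> a + 1 \<noteq> black_pos q \<and> a + 1 = p - 2"
      using nzm_signature_block[OF a'(1,2)] a'(3) a(1) by (auto simp: white_extreme_def)
    then have "white_extreme (Suc (Suc k)) \<longleftrightarrow> mt_black p rightmost (Suc k)"
      using black L True block_len_le[of q] by auto
    moreover have "white_extreme (Suc k) \<longleftrightarrow> a = 1"
      using white L(1) True block_len_le[of q] p_minus_3_ge by auto
    ultimately show ?thesis using short by simp
  next
    case False
    then have a': "1 \<le> (1::nat)" "1 \<le> block_len (Suc q)" "Suc (Suc k) = block_start (Suc q) + 1"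
      using a block_len_ge[of "Suc q"] by (auto simp: block_start_Suc)
    have "\<not> mt_black p rightmost (Suc (Suc k))"
      using black_iff_block_pos[OF assms a'(1,2)] a'(3) black_pos_bounds(1)[of "Suc q"] p_minus_3_ge
      by simp
    moreover have "nzm_signature p (Suc (Suc k)) = 1"
      using nzm_signature_block[OF a'(1,2)] by (simp only: a'(3))
    ultimately have "white_extreme (Suc (Suc k))" by (simp add: white_extreme_def)
    moreover have "a \<noteq> 1" using False a(1) block_len_ge[of q] by simp
    moreover have "white_extreme (Suc k) \<longleftrightarrow> a \<noteq> black_pos q"
      using white L False a(2) by auto
    ultimately show ?thesis using black short by simp
  qed
qed

lemma aligned_upto_all: "aligned_upto M"
proof (induction M)
  case 0
  then show ?case by (simp add: aligned_upto_def)
next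
  case (Suc k)
  have "rm_free (Suc k) + of_bool (white_extreme (Suc (Suc k))) = block_start (Suc k) + 1"
  proof (cases "k = 0")
    case True
    have "rm_free 1 = p - 1" using p_ge_5 by (simp add: rm_free_Suc[of 0] rm_colour_0)
    moreover have "block_start 1 = p - 2" by (simp add: block_start_Suc[of 0])
    ultimately show ?thesis
      using True not_white_extreme_2 p_ge_5 by (simp add: numeral_2_eq_2)
  next
    case False
    then have "rm_free k + of_bool (white_extreme (Suc k)) = block_start k + 1"
      using Suc.IH by (simp add: aligned_upto_def)
    then show ?thesis
      using white_extreme_balance[OF Suc.IH] False block_len_cases[of k] p_minus_2 p_minus_3_ge
      by (auto simp: rm_free_Suc_deg mt_deg_def block_start_Suc)
  qed
  then show ?case using Suc.IH by (auto simp: aligned_upto_def le_Suc_eq)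
qed

lemma rm_free_block_start:
  "1 \<le> m \<Longrightarrow> rm_free m + of_bool (white_extreme (Suc m)) = block_start m + 1"
  using aligned_upto_all[of m] unfolding aligned_upto_def by blast

lemma mt_first_rightmost_block:
  "2 \<le> \<nu> \<Longrightarrow>
    mt_first p rightmost \<nu> + of_bool (white_extreme \<nu>) = block_start (\<nu> - 1) + 1"
  using rm_free_block_start[of "\<nu> - 1"] by (simp add: mt_first_rightmost)

lemma mt_sons_root: "mt_sons p c 1 = [2..<p - 1]"
proof -
  have "mt_black p c 1" by (simp add: mt_black_def Let_def)
  then have "mt_deg p c 1 = p - 3" by (simp add: mt_deg_def)
  moreover have "mt_first p c 1 = 2" by (simp add: mt_first_def)
  moreover have "2 + (p - 3) = p - 1" using p_ge_5 by simp
  ultimately show ?thesis by (simp add: mt_sons_def)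
qed

lemma map_nzm_code_digits:
  "1 \<le> i \<Longrightarrow> j \<le> p - 1 \<Longrightarrow> map (nzm_code p) [i..<j] = map (\<lambda>h. [h]) [i..<j]"
  by (auto simp: nzm_code_digit)

lemma no_son_extends_root:
  "\<not> (\<exists>s \<in> set (mt_sons p c 1). nzm_code p s = nzm_code p 1 @ [a])"
proof
  assume "\<exists>s \<in> set (mt_sons p c 1). nzm_code p s = nzm_code p 1 @ [a]"
  then obtain s where s: "s \<in> set (mt_sons p c 1)" "nzm_code p s = nzm_code p 1 @ [a]"
    by blast
  then have "1 \<le> s" "s \<le> p - 2" using mt_sons_root[of c] by auto
  then have "length (nzm_code p s) = 1" by (simp add: nzm_code_digit)
  moreover have "length (nzm_code p 1 @ [a]) = 2" using p_ge_5 by (simp add: nzm_code_digit)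
  ultimately show False using s(2) by simp
qed

lemma root_son_codes:
  "map (nzm_code p) (mt_sons p rightmost 1) = map (\<lambda>h. [h + 1]) [1..<p - 3] @ [[p - 2]]"
proof -
  have "map (nzm_code p) (mt_sons p rightmost 1) = map (\<lambda>h. [h]) [2..<p - 1]"
    unfolding mt_sons_root by (rule map_nzm_code_digits) simp_all
  also have "[2..<p - 1] = map Suc [1..<p - 3] @ [p - 2]"
    using p_minus_1 p_minus_2
    by (simp only: upt_Suc_append map_Suc_upt Suc_1) (use p_ge_5 in simp)
  finally show ?thesis by simp
qed

lemma black_son_codes:
  assumes "2 \<le> \<nu>" "mt_black p rightmost \<nu>"
  shows "map (nzm_code p) (mt_sons p rightmost \<nu>) =
    map (\<lambda>h. nzm_code p (\<nu> - 1) @ [h]) [1..<p - 2]"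
proof -
  have "mt_first p rightmost \<nu> = block_start (\<nu> - 1) + 1"
    using mt_first_rightmost_block[OF assms(1)] assms(2) by (simp add: white_extreme_def)
  then have "mt_sons p rightmost \<nu> =
      [block_start (\<nu> - 1) + 1..<block_start (\<nu> - 1) + (p - 2)]"
    using assms(2) p_minus_2 by (simp add: mt_sons_def mt_deg_def)
  then show ?thesis
    using map_nzm_code_block[of 1 "p - 2" "\<nu> - 1"] block_len_cases[of "\<nu> - 1"] p_minus_2
    by auto
qed

lemma white_extreme_son_codes:
  assumes "1 \<le> \<nu>" "\<not> mt_black p rightmost \<nu>" "nzm_signature p \<nu> \<in> {1, p - 2}"
  shows "map (nzm_code p) (mt_sons p rightmost \<nu>) =
    (nzm_code p (\<nu> - 2) @ [p - 2]) # map (\<lambda>h. nzm_code p (\<nu> - 1) @ [h - 1]) [2..<p - 1]"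
proof -
  have E: "white_extreme \<nu>" using assms(2,3) by (simp add: white_extreme_def)
  have "\<nu> \<noteq> 1" using assms(2) by (auto simp: mt_black_rightmost_iff)
  moreover have "\<nu> \<noteq> 2" using E not_white_extreme_2 by auto
  ultimately have "\<nu> = Suc (Suc (\<nu> - 2))" using assms(1) by linarith
  then obtain n where n: "\<nu> = Suc (Suc n)" by blast
  have "block_len n = p - 2"
    using not_white_extreme_after_short_block[of n] E block_len_cases[of n] n by auto
  then have first: "nzm_code p (block_start (Suc n)) = nzm_code p n @ [p - 2]"
    using nzm_code_block[of "p - 2" n] p_minus_3_ge by (simp add: block_start_Suc)
  define S where "S = block_start (Suc n)"
  have "mt_first p rightmost \<nu> = S"
    using mt_first_rightmost_block[of \<nu>] E by (simp add: S_def n)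
  moreover have "S < S + (p - 2)" using p_ge_5 by simp
  ultimately have "mt_sons p rightmost \<nu> = S # [S + 1..<S + (p - 2)]"
    using assms(2) by (simp add: mt_sons_def mt_deg_def upt_conv_Cons)
  moreover have "map (nzm_code p) [S + 1..<S + (p - 2)]
      = map (\<lambda>h. nzm_code p (Suc n) @ [h]) [1..<p - 2]"
    using map_nzm_code_block[of 1 "p - 2" "Suc n"] block_len_cases[of "Suc n"] p_minus_2
    by (auto simp: S_def)
  moreover have "[2..<p - 1] = map Suc [1..<p - 2]"
    using p_minus_1 by (simp only: map_Suc_upt Suc_1)
  ultimately show ?thesis using first by (simp add: S_def n comp_def)
qed

lemma white_middle_son_codes:
  assumes "1 \<le> \<nu>" "\<not> mt_black p rightmost \<nu>"
    and "1 < nzm_signature p \<nu>" "nzm_signature p \<nu> < p - 2"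
  shows "map (nzm_code p) (mt_sons p rightmost \<nu>) =
    map (\<lambda>h. nzm_code p (\<nu> - 1) @ [h]) [1..<p - 2] @ [nzm_code p (\<nu> - 1) @ [p - 2]]"
proof -
  have "\<nu> \<noteq> 1" using assms(2) by (auto simp: mt_black_rightmost_iff)
  then have \<nu>: "2 \<le> \<nu>" using assms(1) by simp
  obtain q a where a: "1 \<le> a" "a \<le> block_len q" "\<nu> = block_start q + a"
    by (rule block_decomp[OF assms(1)])
  then have "a \<noteq> 1" using assms(3) nzm_signature_block by auto
  then have len: "block_len (\<nu> - 1) = p - 2"
    using block_len_pred[of "\<nu> - 1" a q] a \<nu> by simp
  have "mt_first p rightmost \<nu> = block_start (\<nu> - 1) + 1"
    using mt_first_rightmost_block[OF \<nu>] assms(3,4) by (simp add: white_extreme_def)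
  then have "mt_sons p rightmost \<nu> =
      [block_start (\<nu> - 1) + 1..<block_start (\<nu> - 1) + Suc (p - 2)]"
    using assms(2) by (simp add: mt_sons_def mt_deg_def)
  then have "map (nzm_code p) (mt_sons p rightmost \<nu>) =
      map (\<lambda>h. nzm_code p (\<nu> - 1) @ [h]) [1..<Suc (p - 2)]"
    using map_nzm_code_block[of 1 "Suc (p - 2)" "\<nu> - 1"] len by simp
  also have "[1..<Suc (p - 2)] = [1..<p - 2] @ [p - 2]"
    using p_ge_5 by simp
  finally show ?thesis by simp
qed

lemma successor_is_early_son:
  assumes "1 \<le> \<nu>"
  shows "\<exists>s. nzm_code p s = nzm_code p \<nu> @ [1] \<and>
    (s = mt_sons p rightmost (\<nu> + 1) ! 0 \<or> s = mt_sons p rightmost (\<nu> + 1) ! 1)"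
proof -
  have code: "nzm_code p (block_start \<nu> + 1) = nzm_code p \<nu> @ [1]"
    using nzm_code_block[of 1 \<nu>] block_len_ge[of \<nu>] by simp
  have first:
    "mt_first p rightmost (\<nu> + 1) + of_bool (white_extreme (\<nu> + 1)) = block_start \<nu> + 1"
    using mt_first_rightmost_block[of "\<nu> + 1"] assms by simp
  have "2 \<le> mt_deg p rightmost (\<nu> + 1)"
    using p_ge_5 by (auto simp: mt_deg_def)
  then have "mt_sons p rightmost (\<nu> + 1) ! i = mt_first p rightmost (\<nu> + 1) + i"
    if "i < 2" for i
    using that by (simp add: mt_sons_def)
  then show ?thesis
    using code first by (cases "white_extreme (\<nu> + 1)") auto
qed

end

theorem theorem15:
  fixes p :: nat
  assumes "p \<ge> 5"
  shows
    "map (nzm_code p) (mt_sons p rightmost 1) = map (\<lambda>h. [h + 1]) [1..<p - 3] @ [[p - 2]]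
   \<and> (\<forall>\<nu>\<ge>2. mt_black p rightmost \<nu> \<longrightarrow>
        map (nzm_code p) (mt_sons p rightmost \<nu>) = map (\<lambda>h. nzm_code p (\<nu> - 1) @ [h]) [1..<p - 2])
   \<and> (\<forall>\<nu>\<ge>1. \<not> mt_black p rightmost \<nu> \<longrightarrow> nzm_signature p \<nu> \<in> {1, p - 2} \<longrightarrow>
        map (nzm_code p) (mt_sons p rightmost \<nu>) =
          (nzm_code p (\<nu> - 2) @ [p - 2]) # map (\<lambda>h. nzm_code p (\<nu> - 1) @ [h - 1]) [2..<p - 1])
   \<and> (\<forall>\<nu>\<ge>1. \<not> mt_black p rightmost \<nu> \<longrightarrow>
        1 < nzm_signature p \<nu> \<longrightarrow> nzm_signature p \<nu> < p - 2 \<longrightarrow>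
        map (nzm_code p) (mt_sons p rightmost \<nu>) =
          map (\<lambda>h. nzm_code p (\<nu> - 1) @ [h]) [1..<p - 2] @ [nzm_code p (\<nu> - 1) @ [p - 2]])
   \<and> (\<forall>a\<in>{1..p - 2}. \<not> (\<forall>\<nu>\<ge>1. \<exists>!s. s \<in> set (mt_sons p rightmost \<nu>) \<and>
        nzm_code p s = nzm_code p \<nu> @ [a]))
   \<and> (\<forall>\<nu>\<ge>1. \<exists>s. nzm_code p s = nzm_code p \<nu> @ [1] \<and>
        (s = mt_sons p rightmost (\<nu> + 1) ! 0 \<or> s = mt_sons p rightmost (\<nu> + 1) ! 1))
   \<and> (\<forall>\<alpha>. valid_assignment p \<alpha> \<longrightarrow> (\<forall>a\<in>{1..p - 2}. \<not> (\<forall>\<nu>\<ge>1. \<exists>!s.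
        s \<in> set (mt_sons p (assign \<alpha>) \<nu>) \<and> nzm_code p s = nzm_code p \<nu> @ [a])))"
proof -
  have no_preferred_son: "\<not> (\<forall>\<nu>\<ge>1. \<exists>!s. s \<in> set (mt_sons p c \<nu>) \<and> nzm_code p s = nzm_code p \<nu> @ [a])"
    for c a
    using no_son_extends_root[OF assms, of c a] by blast
  show ?thesis
    using root_son_codes[OF assms] black_son_codes[OF assms] white_extreme_son_codes[OF assms]
      white_middle_son_codes[OF assms] successor_is_early_son[OF assms] no_preferred_son
    by blast
qed

end
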